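(* Let $F$, $H$, $X$, $\Omega$, $Q$ and the sequences generated by the IneIREG method be as described in the context, and suppose $H$ is $\mu$-strongly monotone for some $\mu>0$. Suppose $\eta_k\equiv\eta>0$; $\lambda_k\in[\underline\lambda,\overline\lambda]$ for all $k\ge0$ with $0<\underline\lambda\le\overline\lambda<1/L$, $L:=L_F+\eta L_H$; and $\alpha_0\in[0,1]$ and $\alpha_{k+1}\le(1-\beta_k)\alpha_k$ for all $k\ge0$, where $\beta_k:=\big(\frac{1}{1-\lambda_k^2L^2}+\frac{1}{2\lambda_k\eta\mu}\big)^{-1}$. Define $p_k:=\big(\prod_{i=0}^k(1-\beta_i)\big)^{-1}$ for $k\ge0$, and for $k\ge1$ $\Lambda_k:=\sum_{j=0}^{k-1}\lambda_j\eta p_j$ and $\overline y_k:=\Lambda_k^{-1}\sum_{j=0}^{k-1}\lambda_j\eta p_jy_j$. Let $\varepsilon>0$ and $k\ge1$. If $$k\ge\Big\lceil\Big(\frac{1}{1-\overline\lambda^2L^2}+\frac{1}{2\underline\lambda\eta\mu}\Big)\log\Big(\frac{(k+1)D_X^2}{\underline\lambda\eta\varepsilon}\Big)\Big\rceil,$$ then $-B_H\,\mathrm{dist}(\overline y_k,Q)\le\mathrm{Gap}(\overline y_k,H,Q)\le\varepsilon$.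
   Context: Work in $\mathbb{R}^n$ with Euclidean inner product $\langle\cdot,\cdot\rangle$ and norm $\|\cdot\|$; $\log$ is the natural logarithm. The maps $F\colon \mathrm{Dom}\,F\to\mathbb{R}^n$ and $H\colon\mathrm{Dom}\,H\to\mathbb{R}^n$ are monotone and Lipschitz continuous with constants $L_F>0$ and $L_H>0$; $H$ is $\mu$-strongly monotone means $\langle H(x)-H(y),x-y\rangle\ge\mu\|x-y\|^2$ for all $x,y\in\mathrm{Dom}\,H$. $X$ is a nonempty compact convex set and $\Omega$ a nonempty closed convex set with $X\subset\Omega\subset\mathrm{Dom}\,F\cap\mathrm{Dom}\,H$; $P_X,P_\Omega$ denote orthogonal projections. $Q:=\{x\in X:\langle F(x),y-x\rangle\ge0\ \forall y\in X\}$ is assumed nonempty. $D_X:=\sup_{x,y\in X}\|x-y\|$, $B_H:=\sup_{x\in Q}\|H(x)\|$, $\mathrm{dist}(y,Q)$ is the Euclidean distance to $Q$. $\mathrm{Gap}(z,H,Q):=\sup_{x\in Q}\langle H(x),z-x\rangle$. IneIREG method: start with $x_0=x_{-1}\in X$; for $k=0,1,\dots$, with parameters $\alpha_k\ge0$, $\lambda_k>0$, $\eta_k>0$, set $w_k=x_k+\alpha_k(x_k-x_{k-1})$, $w'_k=P_\Omega(w_k)$, $y_k=P_X\big(w_k-\lambda_k(F(w'_k)+\eta_kH(w'_k))\big)$, $x_{k+1}=P_X\big(w_k-\lambda_k(F(y_k)+\eta_kH(y_k))\big)$. *)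

theory Defs
  imports "HOL-Analysis.Analysis"
begin

definition VI_sol :: "('a::real_inner \<Rightarrow> 'a) \<Rightarrow> 'a set \<Rightarrow> 'a set" where
  "VI_sol F X = {x \<in> X. \<forall>y\<in>X. inner (F x) (y - x) \<ge> 0}"

definition Gap :: "'a::real_inner \<Rightarrow> ('a \<Rightarrow> 'a) \<Rightarrow> 'a set \<Rightarrow> real" where
  "Gap z H Q = (SUP x\<in>Q. inner (H x) (z - x))"

definition monotone_on_set :: "('a::real_inner \<Rightarrow> 'a) \<Rightarrow> 'a set \<Rightarrow> bool" where
  "monotone_on_set F D \<longleftrightarrow> (\<forall>x\<in>D. \<forall>y\<in>D. inner (F x - F y) (x - y) \<ge> 0)"

definition strongly_monotone_on_set :: "real \<Rightarrow> ('a::real_inner \<Rightarrow> 'a) \<Rightarrow> 'a set \<Rightarrow> bool" where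
  "strongly_monotone_on_set \<mu> F D \<longleftrightarrow>
     (\<forall>x\<in>D. \<forall>y\<in>D. inner (F x - F y) (x - y) \<ge> \<mu> * (norm (x - y))\<^sup>2)"

definition lipschitz_on_set :: "real \<Rightarrow> ('a::real_normed_vector \<Rightarrow> 'a) \<Rightarrow> 'a set \<Rightarrow> bool" where
  "lipschitz_on_set L F D \<longleftrightarrow> (\<forall>x\<in>D. \<forall>y\<in>D. norm (F x - F y) \<le> L * norm (x - y))"

end

theory Submission
  imports Defs
begin

text \<open>
  For a solution z of VI(F, X), monotonicity of F and mu-strong monotonicity of H turn the
  extragradient estimate for the operator F + eta H into the contraction
  |x_(j+1) - z|^2 <= (1 - beta_j) |w_j - z|^2 - 2 lam_j eta <H z, y_j - z>.
  After multiplying by p_j = 1 / prod_(i<=j) (1 - beta_i) and expanding the inertial point w_j,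
  p_(j-1) (|x_j - z|^2 - alpha_j |x_(j-1) - z|^2) behaves like a Lyapunov function, because
  alpha_(j+1) <= (1 - beta_j) alpha_j makes p_(j-1) alpha_j nonincreasing; hence the weighted sum
  of the <H z, y_j - z> stays below (k + 1) D_X^2. The gap of the weighted average is that sum
  divided by Lambda_k >= lam eta p_(k-1), and p_(k-1) >= exp (k / C) is at least
  (k + 1) D_X^2 / (lam eta eps) for the prescribed k. The lower bound on the gap is
  Cauchy-Schwarz against the points of Q.
\<close>

lemma lipschitz_on_set_add_scaleR:
  fixes F H :: "'a::real_normed_vector \<Rightarrow> 'a"
  assumes "lipschitz_on_set LF F D" "lipschitz_on_set LH H D" "0 \<le> \<eta>"
  shows "lipschitz_on_set (LF + \<eta> * LH) (\<lambda>a. F a + \<eta> *\<^sub>R H a) D"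
  unfolding lipschitz_on_set_def
proof (intro ballI)
  fix a b assume "a \<in> D" "b \<in> D"
  have "norm (F a + \<eta> *\<^sub>R H a - (F b + \<eta> *\<^sub>R H b)) = norm ((F a - F b) + \<eta> *\<^sub>R (H a - H b))"
    by (simp add: algebra_simps)
  also have "\<dots> \<le> norm (F a - F b) + \<eta> * norm (H a - H b)"
    using norm_triangle_ineq[of "F a - F b" "\<eta> *\<^sub>R (H a - H b)"] \<open>0 \<le> \<eta>\<close> by simp
  also have "\<dots> \<le> LF * norm (a - b) + \<eta> * (LH * norm (a - b))"
    using assms \<open>a \<in> D\<close> \<open>b \<in> D\<close> unfolding lipschitz_on_set_def
    by (intro add_mono mult_left_mono) auto
  finally show "norm (F a + \<eta> *\<^sub>R H a - (F b + \<eta> *\<^sub>R H b)) \<le> (LF + \<eta> * LH) * norm (a - b)"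
    by (simp add: algebra_simps)
qed

lemma lipschitz_on_set_bounded_image:
  assumes "lipschitz_on_set L F D" "bounded S" "S \<subseteq> D"
  shows "bounded (F ` S)"
proof (cases "S = {}")
  case False
  then obtain s where "s \<in> S" by blast
  from \<open>bounded S\<close> obtain e where e: "\<And>x. x \<in> S \<Longrightarrow> dist s x \<le> e"
    by (meson bounded_any_center)
  have "dist (F s) (F x) \<le> \<bar>L\<bar> * e" if "x \<in> S" for x
  proof -
    have "dist (F s) (F x) \<le> L * dist s x"
      using assms(1,3) \<open>s \<in> S\<close> that unfolding lipschitz_on_set_def by (auto simp: dist_norm)
    also have "\<dots> \<le> \<bar>L\<bar> * e"
      using e[OF that]
      by (meson abs_ge_self abs_ge_zero mult_left_mono mult_right_mono order_trans zero_le_dist)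
    finally show ?thesis .
  qed
  then show ?thesis by (auto simp: bounded_any_center[of _ "F s"])
qed simp

text \<open>Evaluating the operator at the projection \<open>v\<close> onto the larger set \<open>\<Omega>\<close> costs nothing:
  that projection fixes the points of \<open>X\<close> and is nonexpansive, so \<open>norm (v - y) \<le> norm (u - y)\<close>.\<close>
lemma extragradient_projection_step:
  fixes u z :: "'a::euclidean_space" and G :: "'a \<Rightarrow> 'a"
  assumes X: "closed X" "convex X" "X \<noteq> {}" and \<Omega>: "closed \<Omega>" "convex \<Omega>" "\<Omega> \<noteq> {}"
    and "X \<subseteq> \<Omega>" and G: "lipschitz_on_set L G \<Omega>" and "0 \<le> L" and "0 < lam" and "z \<in> X"
    and v: "v = closest_point \<Omega> u"
    and y: "y = closest_point X (u - lam *\<^sub>R G v)"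
    and x': "x' = closest_point X (u - lam *\<^sub>R G y)"
  shows "(norm (x' - z))\<^sup>2 \<le> (norm (u - z))\<^sup>2 - (1 - lam\<^sup>2 * L\<^sup>2) * (norm (u - y))\<^sup>2
           - 2 * lam * inner (G y) (y - z)"
proof -
  have "y \<in> X" "x' \<in> X" "v \<in> \<Omega>" using X \<Omega> closest_point_in_set y x' v by blast+
  have x'_opt: "inner (u - lam *\<^sub>R G y - x') (z - x') \<le> 0"
    using closest_point_dot[OF X(2,1) \<open>z \<in> X\<close>] x' by simp
  have y_opt: "inner (u - lam *\<^sub>R G v - y) (x' - y) \<le> 0"
    using closest_point_dot[OF X(2,1) \<open>x' \<in> X\<close>] y by simp
  have "norm (v - y) \<le> norm (u - y)"
    using closest_point_lipschitz[OF \<Omega>(2,1,3), of u y] closest_point_self[of y \<Omega>]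
      \<open>y \<in> X\<close> \<open>X \<subseteq> \<Omega>\<close> v by (auto simp: dist_norm)
  moreover have "norm (G v - G y) \<le> L * norm (v - y)"
    using G \<open>v \<in> \<Omega>\<close> \<open>y \<in> X\<close> \<open>X \<subseteq> \<Omega>\<close> unfolding lipschitz_on_set_def by blast
  ultimately have "inner (G v - G y) (x' - y) \<le> L * norm (u - y) * norm (x' - y)"
    using norm_cauchy_schwarz[of "G v - G y" "x' - y"] \<open>0 \<le> L\<close>
    by (smt (verit) mult_left_mono mult_right_mono norm_ge_zero)
  then have "2 * lam * inner (G v - G y) (x' - y) \<le> 2 * lam * (L * norm (u - y) * norm (x' - y))"
    using \<open>0 < lam\<close> by simp
  also have "\<dots> \<le> lam\<^sup>2 * L\<^sup>2 * (norm (u - y))\<^sup>2 + (norm (x' - y))\<^sup>2"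
    using sum_squares_bound[of "lam * L * norm (u - y)" "norm (x' - y)"]
    by (simp add: power_mult_distrib mult_ac)
  finally have "2 * lam * inner (G v - G y) (x' - y)
      \<le> lam\<^sup>2 * L\<^sup>2 * (norm (u - y))\<^sup>2 + (norm (x' - y))\<^sup>2" .
  moreover have "(norm (x' - z))\<^sup>2 = (norm (u - z))\<^sup>2 - (norm (u - y))\<^sup>2 - (norm (x' - y))\<^sup>2
      + 2 * inner (u - y) (x' - y) + 2 * inner (u - x') (z - x')"
    by (simp add: power2_norm_eq_inner inner_commute algebra_simps)
  moreover have "inner (u - y) (x' - y) + inner (u - x') (z - x')
      \<le> lam * inner (G v - G y) (x' - y) - lam * inner (G y) (y - z)"
    using x'_opt y_opt by (simp add: inner_commute algebra_simps)
  ultimately show ?thesis by (simp add: algebra_simps)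
qed

lemma parallel_sum_mult_power2_le:
  fixes a b s t n :: real
  assumes "0 < a" "0 < b" "0 \<le> n" "n \<le> s + t"
  shows "1 / (1 / a + 1 / b) * n\<^sup>2 \<le> a * s\<^sup>2 + b * t\<^sup>2"
proof -
  have "a * b * n\<^sup>2 \<le> a * b * (s + t)\<^sup>2"
    using assms by (intro mult_left_mono power_mono) auto
  also have "\<dots> \<le> (a + b) * (a * s\<^sup>2 + b * t\<^sup>2)"
    using zero_le_power2[of "a * s - b * t"] by (simp add: power2_eq_square algebra_simps)
  finally show ?thesis
    using assms by (simp add: field_simps)
qed

lemma parallel_sum_bounds:
  fixes a b a' b' :: real
  assumes "0 < a'" "a' \<le> a" "a \<le> 1" "0 < b'" "b' \<le> b"
  shows "0 < 1 / (1 / a' + 1 / b')" and "1 / (1 / a' + 1 / b') \<le> 1 / (1 / a + 1 / b)"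
    and "1 / (1 / a + 1 / b) < 1"
proof -
  have "1 / a \<le> 1 / a'" "1 / b \<le> 1 / b'" "1 \<le> 1 / a" "0 < 1 / b"
    using assms by (simp_all add: frac_le)
  then have "1 < 1 / a + 1 / b" "1 / a + 1 / b \<le> 1 / a' + 1 / b'" by linarith+
  then show "0 < 1 / (1 / a' + 1 / b')" "1 / (1 / a' + 1 / b') \<le> 1 / (1 / a + 1 / b)"
    and "1 / (1 / a + 1 / b) < 1"
    by (simp_all add: frac_le)
qed

definition ireg_beta :: "real \<Rightarrow> real \<Rightarrow> real \<Rightarrow> real \<Rightarrow> real" where
  "ireg_beta L \<eta> \<mu> lam = 1 / (1 / (1 - lam\<^sup>2 * L\<^sup>2) + 1 / (2 * lam * \<eta> * \<mu>))"

lemma ireg_beta_bounds: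
  assumes "0 \<le> L" "0 < \<eta>" "0 < \<mu>" "0 < lam_lo" "lam_lo \<le> lam" "lam \<le> lam_hi" "lam_hi * L < 1"
  shows "0 < 1 / (1 / (1 - lam_hi\<^sup>2 * L\<^sup>2) + 1 / (2 * lam_lo * \<eta> * \<mu>))"
    and "1 / (1 / (1 - lam_hi\<^sup>2 * L\<^sup>2) + 1 / (2 * lam_lo * \<eta> * \<mu>)) \<le> ireg_beta L \<eta> \<mu> lam"
    and "0 < ireg_beta L \<eta> \<mu> lam" and "ireg_beta L \<eta> \<mu> lam < 1"
proof -
  have "0 \<le> lam_hi * L" using assms by simp
  then have "0 < 1 - lam_hi\<^sup>2 * L\<^sup>2"
    using power_less_one_iff[of "lam_hi * L" 2] \<open>lam_hi * L < 1\<close> by (simp add: power_mult_distrib)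
  moreover have "lam\<^sup>2 * L\<^sup>2 \<le> lam_hi\<^sup>2 * L\<^sup>2"
    using assms by (intro mult_right_mono power_mono) auto
  ultimately show lower: "0 < 1 / (1 / (1 - lam_hi\<^sup>2 * L\<^sup>2) + 1 / (2 * lam_lo * \<eta> * \<mu>))"
    and mono: "1 / (1 / (1 - lam_hi\<^sup>2 * L\<^sup>2) + 1 / (2 * lam_lo * \<eta> * \<mu>)) \<le> ireg_beta L \<eta> \<mu> lam"
    and "ireg_beta L \<eta> \<mu> lam < 1"
    using parallel_sum_bounds[of "1 - lam_hi\<^sup>2 * L\<^sup>2" "1 - lam\<^sup>2 * L\<^sup>2" "2 * lam_lo * \<eta> * \<mu>"
        "2 * lam * \<eta> * \<mu>"] assms
    unfolding ireg_beta_def by simp_all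
  from lower mono show "0 < ireg_beta L \<eta> \<mu> lam" by linarith
qed

lemma regularized_extragradient_descent:
  fixes F H :: "'a::euclidean_space \<Rightarrow> 'a"
  assumes F: "monotone_on_set F X" and H: "strongly_monotone_on_set \<mu> H X"
    and G: "lipschitz_on_set L (\<lambda>a. F a + \<eta> *\<^sub>R H a) \<Omega>"
    and X: "closed X" "convex X" "X \<noteq> {}" and \<Omega>: "closed \<Omega>" "convex \<Omega>" "\<Omega> \<noteq> {}"
    and "X \<subseteq> \<Omega>"
    and "0 \<le> L" "0 < lam" "lam * L < 1" "0 < \<eta>" "0 < \<mu>"
    and z: "z \<in> VI_sol F X"
    and v: "v = closest_point \<Omega> u"
    and y: "y = closest_point X (u - lam *\<^sub>R (F v + \<eta> *\<^sub>R H v))"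
    and x': "x' = closest_point X (u - lam *\<^sub>R (F y + \<eta> *\<^sub>R H y))"
  shows "2 * lam * \<eta> * inner (H z) (y - z)
    \<le> (1 - ireg_beta L \<eta> \<mu> lam) * (norm (u - z))\<^sup>2 - (norm (x' - z))\<^sup>2"
proof -
  have "z \<in> X" "y \<in> X" using z X closest_point_in_set y by (auto simp: VI_sol_def)
  have "0 \<le> lam * L" using assms by simp
  then have contraction: "0 < 1 - lam\<^sup>2 * L\<^sup>2"
    using power_less_one_iff[of "lam * L" 2] \<open>lam * L < 1\<close> by (simp add: power_mult_distrib)
  have EG: "(norm (x' - z))\<^sup>2 \<le> (norm (u - z))\<^sup>2 - (1 - lam\<^sup>2 * L\<^sup>2) * (norm (u - y))\<^sup>2
      - 2 * lam * inner (F y + \<eta> *\<^sub>R H y) (y - z)"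
    using extragradient_projection_step[OF X \<Omega> \<open>X \<subseteq> \<Omega>\<close> G \<open>0 \<le> L\<close> \<open>0 < lam\<close> \<open>z \<in> X\<close> v y x']
    by simp
  have "inner (F z) (y - z) \<ge> 0" using z \<open>y \<in> X\<close> by (simp add: VI_sol_def)
  moreover have "inner (F y - F z) (y - z) \<ge> 0"
    using F \<open>y \<in> X\<close> \<open>z \<in> X\<close> by (simp add: monotone_on_set_def)
  moreover have "\<eta> * (\<mu> * (norm (y - z))\<^sup>2) \<le> \<eta> * inner (H y - H z) (y - z)"
    using H \<open>y \<in> X\<close> \<open>z \<in> X\<close> \<open>0 < \<eta>\<close> by (simp add: strongly_monotone_on_set_def)
  moreover have "inner (F y + \<eta> *\<^sub>R H y) (y - z) = inner (F y - F z) (y - z) + inner (F z) (y - z)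
      + \<eta> * inner (H y - H z) (y - z) + \<eta> * inner (H z) (y - z)"
    by (simp add: algebra_simps)
  ultimately have "\<eta> * inner (H z) (y - z) + \<eta> * (\<mu> * (norm (y - z))\<^sup>2)
      \<le> inner (F y + \<eta> *\<^sub>R H y) (y - z)"
    by linarith
  then have "2 * lam * \<eta> * inner (H z) (y - z) + 2 * lam * \<eta> * \<mu> * (norm (y - z))\<^sup>2
      \<le> 2 * lam * inner (F y + \<eta> *\<^sub>R H y) (y - z)"
    using \<open>0 < lam\<close> mult_left_mono[of _ _ "2 * lam"] by (fastforce simp: algebra_simps)
  moreover have "ireg_beta L \<eta> \<mu> lam * (norm (u - z))\<^sup>2
      \<le> (1 - lam\<^sup>2 * L\<^sup>2) * (norm (u - y))\<^sup>2 + 2 * lam * \<eta> * \<mu> * (norm (y - z))\<^sup>2"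
    unfolding ireg_beta_def
    using parallel_sum_mult_power2_le[OF contraction, of "2 * lam * \<eta> * \<mu>"]
      norm_triangle_ineq[of "u - y" "y - z"] assms by simp
  ultimately show ?thesis
    using EG left_diff_distrib[of 1 "ireg_beta L \<eta> \<mu> lam" "(norm (u - z))\<^sup>2"] by linarith
qed

lemma norm_extrapolation_power2:
  fixes p q :: "'a::real_inner"
  shows "(norm ((1 + a) *\<^sub>R p - a *\<^sub>R q))\<^sup>2
    = (1 + a) * (norm p)\<^sup>2 - a * (norm q)\<^sup>2 + a * (1 + a) * (norm (p - q))\<^sup>2"
  unfolding power2_norm_eq_inner by (simp add: inner_commute algebra_simps)

lemma inertial_weighted_sum_le:
  fixes a e g alpha beta :: "nat \<Rightarrow> real"
  assumes beta: "\<And>j. 0 \<le> beta j" "\<And>j. beta j < 1"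
    and alpha: "\<And>j. 0 \<le> alpha j" "alpha 0 \<le> 1" "\<And>j. alpha (Suc j) \<le> (1 - beta j) * alpha j"
    and a: "\<And>j. 0 \<le> a j" "\<And>j. a j \<le> B"
    and e: "\<And>j. e j \<le> (1 + alpha j) * a j - alpha j * a (j - 1) + alpha j * (1 + alpha j) * B"
    and g: "\<And>j. g j \<le> (1 - beta j) * e j - a (Suc j)"
  shows "(\<Sum>j<k. g j / (\<Prod>i\<le>j. 1 - beta i)) \<le> (2 * real k + 1) * B"
proof -
  define q where "q m = 1 / (\<Prod>i<m. 1 - beta i)" for m
  define r where "r m = q m * alpha m" for m
  \<comment> \<open>The slack \<open>r m * B\<close> keeps \<open>\<Psi>\<close> nonnegative, so that the telescoped sum is bounded.\<close>
  define \<Psi> where "\<Psi> m = q m * a m - r m * a (m - 1) + r m * B" for m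
  have prod_beta_pos: "0 < (\<Prod>i<m. 1 - beta i)" for m
    using beta by (intro prod_pos) auto
  have q_pos: "0 < q m" for m
    using prod_beta_pos by (simp add: q_def)
  have q_ge_1: "1 \<le> q m" for m
    using prod_beta_pos[of m] prod_le_1[of "{..<m}" "\<lambda>i. 1 - beta i"] beta
    by (simp add: q_def less_imp_le)
  have q_Suc: "q (Suc m) * (1 - beta m) = q m" for m
    using prod_beta_pos[of m] beta(2)[of m] by (simp add: q_def)
  have r_Suc_le: "r (Suc m) \<le> r m" for m
  proof -
    have "r (Suc m) \<le> q (Suc m) * ((1 - beta m) * alpha m)"
      unfolding r_def using alpha(3) q_pos by (simp add: mult_left_mono)
    also have "\<dots> = r m"
      unfolding r_def using q_Suc by (simp add: mult.assoc[symmetric])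
    finally show ?thesis .
  qed
  have r_le_1: "r m \<le> 1" for m
  proof (induction m)
    case 0
    then show ?case using alpha(2) by (simp add: r_def q_def)
  next
    case (Suc m)
    then show ?case using r_Suc_le[of m] by linarith
  qed
  have r_nonneg: "0 \<le> r m" for m
    using q_pos alpha(1) by (simp add: r_def less_imp_le)
  have alpha_le_r: "alpha m \<le> r m" for m
    using mult_right_mono[OF q_ge_1 alpha(1)] by (simp add: r_def)
  have B_nonneg: "0 \<le> B" using a[of 0] by linarith
  have step: "q (Suc m) * g m \<le> \<Psi> m - \<Psi> (Suc m) + 2 * B" for m
  proof -
    have "q (Suc m) * g m \<le> q (Suc m) * ((1 - beta m) * e m - a (Suc m))"
      using g q_pos by (simp add: mult_left_mono)
    also have "\<dots> = q m * e m - q (Suc m) * a (Suc m)"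
      using q_Suc[of m] by (simp add: right_diff_distrib mult.assoc[symmetric])
    finally have "q (Suc m) * g m \<le> q m * e m - q (Suc m) * a (Suc m)" .
    moreover have "q m * e m
        \<le> q m * a m + r m * a m - r m * a (m - 1) + r m * (1 + alpha m) * B"
      using mult_left_mono[OF e, of "q m"] q_pos[of m] by (simp add: r_def algebra_simps)
    moreover have "r m * a m - r (Suc m) * a m \<le> r m * B - r (Suc m) * B"
      using mult_left_mono[OF a(2), of "r m - r (Suc m)"] r_Suc_le[of m]
      by (simp add: algebra_simps)
    moreover have "r m * (1 + alpha m) * B \<le> 2 * B"
      using alpha_le_r[of m] r_le_1[of m] r_nonneg[of m] alpha(1)[of m] B_nonneg
      by (intro mult_right_mono) (auto intro: order_trans[OF mult_mono, of _ 1 _ 2])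
    ultimately show ?thesis by (simp add: \<Psi>_def)
  qed
  have "(\<Sum>j<k. g j / (\<Prod>i\<le>j. 1 - beta i)) = (\<Sum>j<k. q (Suc j) * g j)"
    by (simp add: q_def lessThan_Suc_atMost)
  also have "\<dots> \<le> (\<Sum>j<k. (\<Psi> j - \<Psi> (Suc j)) + 2 * B)"
    by (intro sum_mono step)
  also have "\<dots> = \<Psi> 0 - \<Psi> k + 2 * real k * B"
    by (simp add: sum.distrib sum_lessThan_telescope')
  also have "\<dots> \<le> (2 * real k + 1) * B"
  proof -
    have "\<Psi> 0 = (1 - alpha 0) * a 0 + alpha 0 * B"
      by (simp add: \<Psi>_def r_def q_def algebra_simps)
    also have "\<dots> \<le> (1 - alpha 0) * B + alpha 0 * B"
      using alpha(1,2) a(2) by (simp add: mult_left_mono)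
    finally have "\<Psi> 0 \<le> B" by (simp add: algebra_simps)
    moreover have "r k * a (k - 1) \<le> r k * B" "0 \<le> q k * a k"
      using a q_pos[of k] r_nonneg[of k] by (simp_all add: mult_left_mono)
    then have "0 \<le> \<Psi> k" by (simp add: \<Psi>_def)
    ultimately show ?thesis by (simp add: algebra_simps)
  qed
  finally show ?thesis .
qed

text \<open>In hypothesis \<open>w\<close>, truncated subtraction gives \<open>x (0 - 1) = x 0\<close>,
  which is the convention \<open>x_(-1) = x_0\<close> of the method.\<close>
lemma ireg_weighted_regret_le:
  fixes F H :: "'a::euclidean_space \<Rightarrow> 'a" and x w w' y :: "nat \<Rightarrow> 'a"
  assumes F: "monotone_on_set F X" and H: "strongly_monotone_on_set \<mu> H X"
    and G: "lipschitz_on_set L (\<lambda>a. F a + \<eta> *\<^sub>R H a) \<Omega>"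
    and X: "compact X" "convex X" "X \<noteq> {}" and \<Omega>: "closed \<Omega>" "convex \<Omega>" "\<Omega> \<noteq> {}"
    and "X \<subseteq> \<Omega>" and "0 \<le> L" "0 < \<eta>" "0 < \<mu>"
    and lam: "\<And>j. 0 < lam j" "\<And>j. lam j * L < 1"
    and alpha: "\<And>j. 0 \<le> alpha j" "alpha 0 \<le> 1"
      "\<And>j. alpha (Suc j) \<le> (1 - ireg_beta L \<eta> \<mu> (lam j)) * alpha j"
    and "x 0 \<in> X"
    and w: "\<And>j. w j = x j + alpha j *\<^sub>R (x j - x (j - 1))"
    and w': "\<And>j. w' j = closest_point \<Omega> (w j)"
    and y: "\<And>j. y j = closest_point X (w j - lam j *\<^sub>R (F (w' j) + \<eta> *\<^sub>R H (w' j)))"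
    and x: "\<And>j. x (Suc j) = closest_point X (w j - lam j *\<^sub>R (F (y j) + \<eta> *\<^sub>R H (y j)))"
    and z: "z \<in> VI_sol F X"
  shows "(\<Sum>j<k. lam j * \<eta> * (1 / (\<Prod>i\<le>j. 1 - ireg_beta L \<eta> \<mu> (lam i))) * inner (H z) (y j - z))
    \<le> (real k + 1) * (diameter X)\<^sup>2"
proof -
  have "(\<Sum>j<k. 2 * lam j * \<eta> * inner (H z) (y j - z) / (\<Prod>i\<le>j. 1 - ireg_beta L \<eta> \<mu> (lam i)))
    \<le> (2 * real k + 1) * (diameter X)\<^sup>2"
  proof (rule inertial_weighted_sum_le[where a = "\<lambda>j. (norm (x j - z))\<^sup>2"
        and e = "\<lambda>j. (norm (w j - z))\<^sup>2" and alpha = alpha])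
    have "closed X" "bounded X" using X by (auto intro: compact_imp_closed compact_imp_bounded)
    have x_in: "x j \<in> X" for j
      using \<open>x 0 \<in> X\<close> x closest_point_in_set[OF \<open>closed X\<close> \<open>X \<noteq> {}\<close>] by (cases j) auto
    have "z \<in> X" using z by (simp add: VI_sol_def)
    have diam: "(norm (a - b))\<^sup>2 \<le> (diameter X)\<^sup>2" if "a \<in> X" "b \<in> X" for a b
      using diameter_bounded_bound[OF \<open>bounded X\<close> that] by (simp add: dist_norm power_mono)
    show "0 \<le> ireg_beta L \<eta> \<mu> (lam j)" "ireg_beta L \<eta> \<mu> (lam j) < 1" for j
      using ireg_beta_bounds(3,4)[of L \<eta> \<mu> "lam j" "lam j" "lam j"] lam \<open>0 \<le> L\<close> \<open>0 < \<eta>\<close> \<open>0 < \<mu>\<close>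
      by auto
    show "0 \<le> (norm (x j - z))\<^sup>2" "(norm (x j - z))\<^sup>2 \<le> (diameter X)\<^sup>2" for j
      using diam x_in \<open>z \<in> X\<close> by auto
    show "(norm (w j - z))\<^sup>2 \<le> (1 + alpha j) * (norm (x j - z))\<^sup>2
        - alpha j * (norm (x (j - 1) - z))\<^sup>2 + alpha j * (1 + alpha j) * (diameter X)\<^sup>2" for j
    proof -
      have "w j - z = (1 + alpha j) *\<^sub>R (x j - z) - alpha j *\<^sub>R (x (j - 1) - z)"
        by (simp add: w algebra_simps)
      then have "(norm (w j - z))\<^sup>2 = (1 + alpha j) * (norm (x j - z))\<^sup>2
          - alpha j * (norm (x (j - 1) - z))\<^sup>2
          + alpha j * (1 + alpha j) * (norm (x j - x (j - 1)))\<^sup>2"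
        by (simp add: norm_extrapolation_power2)
      moreover have "alpha j * (1 + alpha j) * (norm (x j - x (j - 1)))\<^sup>2
          \<le> alpha j * (1 + alpha j) * (diameter X)\<^sup>2"
        using diam[OF x_in x_in] alpha(1)[of j] by (intro mult_left_mono) auto
      ultimately show ?thesis by linarith
    qed
    show "2 * lam j * \<eta> * inner (H z) (y j - z)
        \<le> (1 - ireg_beta L \<eta> \<mu> (lam j)) * (norm (w j - z))\<^sup>2 - (norm (x (Suc j) - z))\<^sup>2" for j
      using regularized_extragradient_descent[OF F H G \<open>closed X\<close> X(2,3) \<Omega> \<open>X \<subseteq> \<Omega>\<close> \<open>0 \<le> L\<close>
          lam(1) lam(2) \<open>0 < \<eta>\<close> \<open>0 < \<mu>\<close> z w' y x] .
  qed (use alpha in auto)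
  moreover have "(\<Sum>j<k. 2 * lam j * \<eta> * inner (H z) (y j - z) / (\<Prod>i\<le>j. 1 - ireg_beta L \<eta> \<mu> (lam i)))
    = 2 * (\<Sum>j<k. lam j * \<eta> * (1 / (\<Prod>i\<le>j. 1 - ireg_beta L \<eta> \<mu> (lam i))) * inner (H z) (y j - z))"
    by (simp add: sum_distrib_left mult.assoc)
  moreover have "(2 * real k + 1) * (diameter X)\<^sup>2 \<le> 2 * ((real k + 1) * (diameter X)\<^sup>2)"
    by (simp add: algebra_simps)
  ultimately show ?thesis by linarith
qed

lemma prod_one_minus_le_exp:
  fixes b :: "nat \<Rightarrow> real"
  assumes "\<And>i. c \<le> b i" "\<And>i. b i \<le> 1"
  shows "(\<Prod>i<k. 1 - b i) \<le> exp (- (real k * c))"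
proof -
  have "(\<Prod>i<k. 1 - b i) \<le> (\<Prod>i<k. exp (- c))"
  proof (rule prod_mono)
    fix i
    have "1 - b i \<le> exp (- b i)" using exp_ge_add_one_self[of "- b i"] by simp
    also have "\<dots> \<le> exp (- c)" using assms(1) by simp
    finally show "0 \<le> 1 - b i \<and> 1 - b i \<le> exp (- c)" using assms(2) by simp
  qed
  also have "\<dots> = exp (- (real k * c))"
    by (simp add: exp_of_nat_mult[symmetric])
  finally show ?thesis .
qed

lemma total_weight_ge_of_iteration_count:
  fixes beta lam :: "nat \<Rightarrow> real"
  assumes "0 < C" "\<And>i. 1 / C \<le> beta i" "\<And>i. beta i < 1"
    and "0 < lam_lo" "\<And>j. lam_lo \<le> lam j" "0 < \<eta>" "0 < \<epsilon>" "1 \<le> k"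
    and "\<lceil>C * ln (M / (lam_lo * \<eta> * \<epsilon>))\<rceil> \<le> int k"
  shows "0 < (\<Sum>j<k. lam j * \<eta> * (1 / (\<Prod>i\<le>j. 1 - beta i)))"
    and "M \<le> \<epsilon> * (\<Sum>j<k. lam j * \<eta> * (1 / (\<Prod>i\<le>j. 1 - beta i)))"
proof -
  define W where "W = (\<Sum>j<k. lam j * \<eta> * (1 / (\<Prod>i\<le>j. 1 - beta i)))"
  define R where "R = M / (lam_lo * \<eta> * \<epsilon>)"
  obtain k' where k': "k = Suc k'" using \<open>1 \<le> k\<close> by (cases k) auto
  have prod_beta_pos: "0 < (\<Prod>i<m. 1 - beta i)" for m
    using assms(3) by (intro prod_pos) auto
  have "lam_lo * \<eta> * (1 / (\<Prod>i<k. 1 - beta i)) \<le> lam k' * \<eta> * (1 / (\<Prod>i\<le>k'. 1 - beta i))"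
    using assms prod_beta_pos[of k] unfolding k' lessThan_Suc_atMost
    by (intro mult_right_mono) auto
  also have "\<dots> \<le> W"
    unfolding W_def
  proof (rule member_le_sum)
    show "0 \<le> lam j * \<eta> * (1 / (\<Prod>i\<le>j. 1 - beta i))" for j
      using assms(4) assms(5)[of j] assms(6) prod_beta_pos[of "Suc j"]
      by (simp add: lessThan_Suc_atMost)
  qed (use k' in auto)
  finally have W_ge: "lam_lo * \<eta> * (1 / (\<Prod>i<k. 1 - beta i)) \<le> W" .
  moreover have "0 < lam_lo * \<eta> * (1 / (\<Prod>i<k. 1 - beta i))"
    using assms(4,6) prod_beta_pos[of k] by simp
  ultimately show "0 < W" by linarith
  have "R * (\<Prod>i<k. 1 - beta i) \<le> 1"
  proof (cases "R \<le> 0")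
    case True
    then have "R * (\<Prod>i<k. 1 - beta i) \<le> 0"
      using prod_beta_pos[of k] by (simp add: mult_nonpos_nonneg)
    then show ?thesis by linarith
  next
    case False
    then have "0 < R" by simp
    moreover have "ln R \<le> real k / C"
      using assms by (simp add: R_def ceiling_le_iff field_simps)
    ultimately have "R \<le> exp (real k / C)"
      by (metis exp_le_cancel_iff exp_ln)
    moreover have "(\<Prod>i<k. 1 - beta i) \<le> exp (- (real k / C))"
      using prod_one_minus_le_exp[of "1 / C" beta k] assms(2,3) by (simp add: less_imp_le)
    ultimately have "R * (\<Prod>i<k. 1 - beta i) \<le> exp (real k / C) * exp (- (real k / C))"
      using \<open>0 < R\<close> less_imp_le[OF prod_beta_pos] by (intro mult_mono) auto
    then show ?thesis by (simp add: exp_minus)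
  qed
  then have "M \<le> \<epsilon> * (lam_lo * \<eta> * (1 / (\<Prod>i<k. 1 - beta i)))"
    using prod_beta_pos assms by (simp add: R_def field_simps)
  also have "\<dots> \<le> \<epsilon> * W"
    using W_ge assms(7) by (intro mult_left_mono) auto
  finally show "M \<le> \<epsilon> * W" .
qed

lemma Gap_weighted_average_le:
  fixes y :: "'b \<Rightarrow> 'a::real_inner"
  assumes "Q \<noteq> {}" "0 < (\<Sum>j\<in>A. c j)"
    and regret: "\<And>z. z \<in> Q \<Longrightarrow> (\<Sum>j\<in>A. c j * inner (H z) (y j - z)) \<le> M"
  shows "Gap ((1 / (\<Sum>j\<in>A. c j)) *\<^sub>R (\<Sum>j\<in>A. c j *\<^sub>R y j)) H Q \<le> M / (\<Sum>j\<in>A. c j)"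
  unfolding Gap_def
proof (rule cSUP_least[OF \<open>Q \<noteq> {}\<close>])
  fix z assume "z \<in> Q"
  have "inner (H z) ((1 / (\<Sum>j\<in>A. c j)) *\<^sub>R (\<Sum>j\<in>A. c j *\<^sub>R y j) - z)
      = (\<Sum>j\<in>A. c j * inner (H z) (y j - z)) / (\<Sum>j\<in>A. c j)"
    using assms(2)
    by (simp add: inner_diff_right inner_sum_right right_diff_distrib sum_subtractf
        sum_distrib_right[symmetric] field_simps)
  also have "\<dots> \<le> M / (\<Sum>j\<in>A. c j)"
    using regret[OF \<open>z \<in> Q\<close>] assms(2) by (simp add: divide_right_mono)
  finally show "inner (H z) ((1 / (\<Sum>j\<in>A. c j)) *\<^sub>R (\<Sum>j\<in>A. c j *\<^sub>R y j) - z)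
      \<le> M / (\<Sum>j\<in>A. c j)" .
qed

lemma neg_infdist_le_Gap:
  fixes H :: "'a::real_inner \<Rightarrow> 'a"
  assumes "Q \<noteq> {}" "bounded Q" "bounded (H ` Q)"
  shows "- (SUP q\<in>Q. norm (H q)) * infdist y Q \<le> Gap y H Q"
proof -
  define BH where "BH = (SUP q\<in>Q. norm (H q))"
  obtain M N where M: "\<And>q. q \<in> Q \<Longrightarrow> norm (H q) \<le> M" and N: "\<And>q. q \<in> Q \<Longrightarrow> norm q \<le> N"
    using assms(2,3) by (meson bounded_iff image_eqI)
  have "inner (H q) (y - q) \<le> M * (norm y + N)" if "q \<in> Q" for q
  proof -
    have "inner (H q) (y - q) \<le> norm (H q) * norm (y - q)" by (rule norm_cauchy_schwarz)
    also have "\<dots> \<le> M * (norm y + N)"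
      using M[OF that] N[OF that] norm_triangle_ineq4[of y q]
        order_trans[OF norm_ge_zero M[OF that]]
      by (intro mult_mono) auto
    finally show ?thesis .
  qed
  then have bdd_Gap: "bdd_above ((\<lambda>q. inner (H q) (y - q)) ` Q)"
    by (intro bdd_aboveI2)
  have bdd_BH: "bdd_above ((\<lambda>q. norm (H q)) ` Q)"
    using M by (intro bdd_aboveI2)
  have dist_le: "- BH * dist y q \<le> Gap y H Q" if "q \<in> Q" for q
  proof -
    have "- BH * dist y q \<le> - (norm (H q) * norm (y - q))"
      using cSUP_upper[OF that bdd_BH] by (simp add: BH_def dist_norm mult_right_mono)
    also have "\<dots> \<le> inner (H q) (y - q)"
      using norm_cauchy_schwarz[of "- H q" "y - q"] by simp
    also have "\<dots> \<le> Gap y H Q"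
      unfolding Gap_def using bdd_Gap that by (rule cSUP_upper2) simp
    finally show ?thesis .
  qed
  obtain q0 where "q0 \<in> Q" using assms(1) by blast
  have "0 \<le> BH"
    unfolding BH_def using order_trans[OF norm_ge_zero cSUP_upper[OF \<open>q0 \<in> Q\<close> bdd_BH]] .
  show ?thesis
  proof (cases "BH = 0")
    case True
    then show ?thesis using dist_le[OF \<open>q0 \<in> Q\<close>] by (simp add: BH_def)
  next
    case False
    with \<open>0 \<le> BH\<close> have "0 < BH" by simp
    have "- Gap y H Q / BH \<le> dist y q" if "q \<in> Q" for q
    proof -
      have "- Gap y H Q \<le> dist y q * BH"
        using dist_le[OF that] mult.commute[of BH "dist y q"] by linarith
      then show ?thesis using \<open>0 < BH\<close> by (simp only: pos_divide_le_eq)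
    qed
    then have "- Gap y H Q / BH \<le> infdist y Q"
      unfolding infdist_notempty[OF assms(1)] using assms(1) by (intro cINF_greatest)
    then show ?thesis using \<open>0 < BH\<close> by (simp add: BH_def field_simps)
  qed
qed

theorem corollary4p16:
  fixes F H :: "'a::euclidean_space \<Rightarrow> 'a"
    and DomF DomH X \<Omega> :: "'a set"
    and LF LH \<mu> \<eta> lam_lo lam_hi \<epsilon> :: real
    and alpha lam :: "nat \<Rightarrow> real"
    and x w w' y :: "nat \<Rightarrow> 'a"
    and k :: nat
  assumes F_mono: "monotone_on_set F DomF"
    and F_lip: "lipschitz_on_set LF F DomF" and LF_pos: "LF > 0"
    and H_mono: "monotone_on_set H DomH"
    and H_lip: "lipschitz_on_set LH H DomH" and LH_pos: "LH > 0"
    and H_strong: "strongly_monotone_on_set \<mu> H DomH" and mu_pos: "\<mu> > 0"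
    and X_ne: "X \<noteq> {}" and X_compact: "compact X" and X_convex: "convex X"
    and \<Omega>_ne: "\<Omega> \<noteq> {}" and \<Omega>_closed: "closed \<Omega>" and \<Omega>_convex: "convex \<Omega>"
    and X_sub: "X \<subseteq> \<Omega>" and \<Omega>_sub: "\<Omega> \<subseteq> DomF \<inter> DomH"
    and Q_ne: "VI_sol F X \<noteq> {}"
    and eta_pos: "\<eta> > 0"
    and lam_lo_pos: "0 < lam_lo" and lam_lo_le: "lam_lo \<le> lam_hi"
    and lam_hi_bd: "lam_hi < 1 / (LF + \<eta> * LH)"
    and lam_range: "\<And>j. lam_lo \<le> lam j \<and> lam j \<le> lam_hi"
    and alpha_nonneg: "\<And>j. alpha j \<ge> 0"
    and alpha0: "alpha 0 \<le> 1"
    and alpha_dec: "\<And>j. alpha (Suc j) \<le>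
        (1 - 1 / (1 / (1 - (lam j)\<^sup>2 * (LF + \<eta> * LH)\<^sup>2) + 1 / (2 * lam j * \<eta> * \<mu>))) * alpha j"
    and x0: "x 0 \<in> X"
    and w_def: "\<And>j. w j = x j + alpha j *\<^sub>R (x j - (if j = 0 then x 0 else x (j - 1)))"
    and w'_def: "\<And>j. w' j = closest_point \<Omega> (w j)"
    and y_def: "\<And>j. y j = closest_point X (w j - lam j *\<^sub>R (F (w' j) + \<eta> *\<^sub>R H (w' j)))"
    and x_def: "\<And>j. x (Suc j) = closest_point X (w j - lam j *\<^sub>R (F (y j) + \<eta> *\<^sub>R H (y j)))"
    and eps_pos: "\<epsilon> > 0"
    and k_pos: "k \<ge> 1"
    and k_large: "int k \<ge> \<lceil>(1 / (1 - lam_hi\<^sup>2 * (LF + \<eta> * LH)\<^sup>2) + 1 / (2 * lam_lo * \<eta> * \<mu>))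
        * ln ((real k + 1) * (diameter X)\<^sup>2 / (lam_lo * \<eta> * \<epsilon>))\<rceil>"
  shows "let L = LF + \<eta> * LH;
             beta = (\<lambda>i. 1 / (1 / (1 - (lam i)\<^sup>2 * L\<^sup>2) + 1 / (2 * lam i * \<eta> * \<mu>)));
             p = (\<lambda>j. 1 / (\<Prod>i\<le>j. 1 - beta i));
             Lam = (\<Sum>j<k. lam j * \<eta> * p j);
             ybar = (1 / Lam) *\<^sub>R (\<Sum>j<k. (lam j * \<eta> * p j) *\<^sub>R y j);
             Q = VI_sol F X;
             BH = (SUP q\<in>Q. norm (H q))
         in - BH * infdist ybar Q \<le> Gap ybar H Q \<and> Gap ybar H Q \<le> \<epsilon>"
proof -
  define L where "L = LF + \<eta> * LH"
  define \<beta> where "\<beta> i = ireg_beta L \<eta> \<mu> (lam i)" for i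
  define c where "c j = lam j * \<eta> * (1 / (\<Prod>i\<le>j. 1 - \<beta> i))" for j
  define ybar where "ybar = (1 / (\<Sum>j<k. c j)) *\<^sub>R (\<Sum>j<k. c j *\<^sub>R y j)"
  define Q where "Q = VI_sol F X"
  define C where "C = 1 / (1 - lam_hi\<^sup>2 * L\<^sup>2) + 1 / (2 * lam_lo * \<eta> * \<mu>)"
  have "0 < L" using LF_pos LH_pos eta_pos by (simp add: L_def add_pos_pos)
  have "lam_hi * L < 1" using lam_hi_bd \<open>0 < L\<close> by (simp add: L_def pos_less_divide_eq)
  have lam_pos: "0 < lam j" for j using lam_range[of j] lam_lo_pos by linarith
  have lam_L: "lam j * L < 1" for j
    using mult_right_mono[of "lam j" lam_hi L] lam_range[of j] \<open>lam_hi * L < 1\<close> \<open>0 < L\<close> by linarith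
  have \<beta>: "0 < 1 / C" "1 / C \<le> \<beta> j" "\<beta> j < 1" for j
    using ireg_beta_bounds[of L \<eta> \<mu> lam_lo "lam j" lam_hi] lam_range[of j] \<open>lam_hi * L < 1\<close>
      \<open>0 < L\<close> eta_pos mu_pos lam_lo_pos by (simp_all add: C_def \<beta>_def)
  have F_X: "monotone_on_set F X" and H_X: "strongly_monotone_on_set \<mu> H X"
    using F_mono H_strong X_sub \<Omega>_sub unfolding monotone_on_set_def strongly_monotone_on_set_def
    by blast+
  have "lipschitz_on_set LF F \<Omega>" "lipschitz_on_set LH H \<Omega>"
    using F_lip H_lip \<Omega>_sub unfolding lipschitz_on_set_def by blast+
  then have G: "lipschitz_on_set L (\<lambda>a. F a + \<eta> *\<^sub>R H a) \<Omega>"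
    unfolding L_def using eta_pos by (intro lipschitz_on_set_add_scaleR) auto
  have w: "w j = x j + alpha j *\<^sub>R (x j - x (j - 1))" for j
    using w_def[of j] by (cases j) auto
  have regret: "(\<Sum>j<k. c j * inner (H z) (y j - z)) \<le> (real k + 1) * (diameter X)\<^sup>2"
    if "z \<in> Q" for z
    using ireg_weighted_regret_le[OF F_X H_X G X_compact X_convex X_ne \<Omega>_closed \<Omega>_convex \<Omega>_ne
        X_sub _ eta_pos mu_pos lam_pos lam_L alpha_nonneg alpha0 _ x0 w w'_def y_def x_def]
      alpha_dec[unfolded L_def[symmetric] ireg_beta_def[symmetric]] \<open>0 < L\<close> that
    by (simp add: Q_def c_def \<beta>_def)
  have weight_pos: "0 < (\<Sum>j<k. c j)"
    and weight: "(real k + 1) * (diameter X)\<^sup>2 \<le> \<epsilon> * (\<Sum>j<k. c j)"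
    unfolding c_def
    using total_weight_ge_of_iteration_count[of C \<beta> lam_lo lam \<eta> \<epsilon> k] \<beta> lam_range lam_lo_pos eta_pos
      eps_pos k_pos k_large
    by (simp_all add: C_def L_def)
  have "Gap ybar H Q \<le> (real k + 1) * (diameter X)\<^sup>2 / (\<Sum>j<k. c j)"
    using Gap_weighted_average_le[OF Q_ne[folded Q_def] weight_pos regret] by (simp add: ybar_def)
  also have "\<dots> \<le> \<epsilon>"
    using weight weight_pos by (simp add: pos_divide_le_eq mult.commute)
  finally have upper: "Gap ybar H Q \<le> \<epsilon>" .
  have lower: "- (SUP q\<in>Q. norm (H q)) * infdist ybar Q \<le> Gap ybar H Q"
  proof (rule neg_infdist_le_Gap)
    have "Q \<subseteq> X" by (auto simp: Q_def VI_sol_def)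
    then show "bounded Q" using X_compact by (meson bounded_subset compact_imp_bounded)
    show "bounded (H ` Q)"
      using lipschitz_on_set_bounded_image[OF H_lip \<open>bounded Q\<close>] \<open>Q \<subseteq> X\<close> X_sub \<Omega>_sub by blast
  qed (use Q_ne Q_def in simp)
  from lower upper show ?thesis
    by (simp add: Let_def ybar_def c_def \<beta>_def ireg_beta_def L_def Q_def)
qed
end
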